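(* Let $P$ be a polygon with vertex set $V$ and a non-empty dissection $D$, and let $d=\{\zeta,\eta\}\in D$ be such that $D = \{d\}\cup D_2$ where $D_2$ is a dissection of the subpolygon with vertex set $V_2 = \{\varepsilon \in V : \eta \le \varepsilon \le \zeta\}$. Let $U_1 = \{\varepsilon\in V : \zeta<\varepsilon<\eta\}$ and $U_2 = \{\varepsilon\in V : \eta<\varepsilon<\zeta\}$. Let $\alpha \in U_1$, $\beta \in U_2$, and let $\pi = (\pi_1,\dots,\pi_p) \in \mathcal{T}_{P,D}(\alpha,\beta)$ with $p\ge 3$, $\pi_2 = \zeta$ and $\pi_3 \neq \eta$. Then $\eta < \pi_i \le \zeta$ (i.e. $\pi_i \in U_2\cup\{\zeta\}$) for all $i \ge 2$.
   Context: A polygon is a finite set $V$ of at least three vertices with a cyclic order, pictured as a convex polygon in the plane with vertices anticlockwise. "$a\le\varepsilon\le b$" means $\varepsilon$ lies on the cyclic interval from $a$ to $b$ in the positive direction, endpoints included; "$<$" excludes the corresponding endpoint. A subpolygon is a subset of at least three vertices with induced cyclic order. A diagonal is a two-element subset of $V$ (edges included); non-edges are internal. Diagonals cross if they consist of four distinct vertices $\alpha,\beta,\gamma,\delta$ appearing cyclically as $\alpha,\gamma,\beta,\delta$ or $\alpha,\delta,\beta,\gamma$. A dissection is a set of pairwise non-crossing internal diagonals. For vertices $\pi_1\neq\pi_p$, a $T$-path from $\pi_1$ to $\pi_p$ w.r.t. $D$ is a tuple $(\pi_1,\dots,\pi_p)$ of vertices with: (i) $\{\pi_1,\pi_2\},\dots,\{\pi_{p-1},\pi_p\}$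 pairwise different diagonals; (ii) no $\{\pi_i,\pi_{i+1}\}$ crosses a diagonal of $D$; (iii) each $\{\pi_{2j},\pi_{2j+1}\}$ lies in $D$, and these cross the segment $\{\pi_1,\pi_p\}$ at pairwise different points progressing monotonically from $\pi_1$ to $\pi_p$. $\mathcal{T}_{P,D}(\alpha,\beta)$ is the set of such paths from $\alpha$ to $\beta$. *)

theory Defs
  imports Main
begin

text \<open>The polygon P has vertex set {0..<n} (n >= 3) with the cyclic order
  0, 1, ..., n-1, 0 (anticlockwise). Subpolygons carry the induced cyclic order.\<close>

definition cdist :: "nat \<Rightarrow> nat \<Rightarrow> nat \<Rightarrow> nat" where
  "cdist n a x = nat ((int x - int a) mod int n)"

text \<open>a <= e <= b (cyclic interval from a to b, endpoints included)\<close>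
definition cyc_cc :: "nat \<Rightarrow> nat \<Rightarrow> nat \<Rightarrow> nat \<Rightarrow> bool" where
  "cyc_cc n a e b \<longleftrightarrow> cdist n a e \<le> cdist n a b"

definition cyc_oo :: "nat \<Rightarrow> nat \<Rightarrow> nat \<Rightarrow> nat \<Rightarrow> bool" where
  "cyc_oo n a e b \<longleftrightarrow> 0 < cdist n a e \<and> cdist n a e < cdist n a b"

definition cyc_oc :: "nat \<Rightarrow> nat \<Rightarrow> nat \<Rightarrow> nat \<Rightarrow> bool" where
  "cyc_oc n a e b \<longleftrightarrow> 0 < cdist n a e \<and> cdist n a e \<le> cdist n a b"

definition cyc_order4 :: "nat \<Rightarrow> nat \<Rightarrow> nat \<Rightarrow> nat \<Rightarrow> nat \<Rightarrow> bool" where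
  "cyc_order4 n a b c d \<longleftrightarrow> distinct [a, b, c, d] \<and>
     cdist n a b < cdist n a c \<and> cdist n a c < cdist n a d"

definition crosses :: "nat \<Rightarrow> nat set \<Rightarrow> nat set \<Rightarrow> bool" where
  "crosses n d1 d2 \<longleftrightarrow> (\<exists>\<alpha> \<beta> \<gamma> \<delta>. d1 = {\<alpha>, \<beta>} \<and> d2 = {\<gamma>, \<delta>} \<and>
     distinct [\<alpha>, \<beta>, \<gamma>, \<delta>] \<and>
     (cyc_order4 n \<alpha> \<gamma> \<beta> \<delta> \<or> cyc_order4 n \<alpha> \<delta> \<beta> \<gamma>))"

definition is_diagonal :: "nat set \<Rightarrow> nat set \<Rightarrow> bool" where
  "is_diagonal W e \<longleftrightarrow> (\<exists>a b. e = {a, b} \<and> a \<in> W \<and> b \<in> W \<and> a \<noteq> b)"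

definition is_edge :: "nat \<Rightarrow> nat set \<Rightarrow> nat set \<Rightarrow> bool" where
  "is_edge n W e \<longleftrightarrow> (\<exists>a b. e = {a, b} \<and> a \<in> W \<and> b \<in> W \<and> a \<noteq> b \<and>
     ((\<nexists>w. w \<in> W \<and> cyc_oo n a w b) \<or> (\<nexists>w. w \<in> W \<and> cyc_oo n b w a)))"

definition is_internal :: "nat \<Rightarrow> nat set \<Rightarrow> nat set \<Rightarrow> bool" where
  "is_internal n W e \<longleftrightarrow> is_diagonal W e \<and> \<not> is_edge n W e"

definition is_dissection :: "nat \<Rightarrow> nat set \<Rightarrow> nat set set \<Rightarrow> bool" where
  "is_dissection n W D \<longleftrightarrow> W \<subseteq> {0..<n} \<and> 3 \<le> card W \<and>
     (\<forall>e\<in>D. is_internal n W e) \<and> (\<forall>e1\<in>D. \<forall>e2\<in>D. \<not> crosses n e1 e2)"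

text \<open>For diagonals e1, e2 crossing the segment {a,b}: the crossing point of e1
  comes strictly before that of e2 when walking from a to b.  (Combinatorial
  rendering: e1 separates a from e2.)\<close>
definition cross_before :: "nat \<Rightarrow> nat \<Rightarrow> nat \<Rightarrow> nat set \<Rightarrow> nat set \<Rightarrow> bool" where
  "cross_before n a b e1 e2 \<longleftrightarrow> e1 \<noteq> e2 \<and> (\<exists>x1 y1 x2 y2. e1 = {x1, y1} \<and> e2 = {x2, y2} \<and>
     cyc_oo n a x1 b \<and> cyc_oo n a x2 b \<and> cyc_oo n b y1 a \<and> cyc_oo n b y2 a \<and>
     cdist n a x1 \<le> cdist n a x2 \<and> cdist n b y2 \<le> cdist n b y1)"

text \<open>T-paths (lists, 0-indexed: pi ! (i-1) is the vertex pi_i of the paper)\<close>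
definition T_paths :: "nat \<Rightarrow> nat set set \<Rightarrow> nat \<Rightarrow> nat \<Rightarrow> nat list set" where
  "T_paths n D a b = {pi. a \<noteq> b \<and> 2 \<le> length pi \<and> hd pi = a \<and> last pi = b \<and>
     set pi \<subseteq> {0..<n} \<and>
     \<comment> \<open>(i)\<close>
     (\<forall>i. Suc i < length pi \<longrightarrow> is_diagonal {0..<n} {pi ! i, pi ! Suc i}) \<and>
     (\<forall>i j. Suc i < length pi \<and> Suc j < length pi \<and> i \<noteq> j \<longrightarrow>
        {pi ! i, pi ! Suc i} \<noteq> {pi ! j, pi ! Suc j}) \<and>
     \<comment> \<open>(ii)\<close>
     (\<forall>i. Suc i < length pi \<longrightarrow> (\<forall>e\<in>D. \<not> crosses n {pi ! i, pi ! Suc i} e)) \<and>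
     \<comment> \<open>(iii): 0-indexed odd k corresponds to the paper's pi_{2j}, pi_{2j+1}\<close>
     (\<forall>k. odd k \<and> Suc k < length pi \<longrightarrow>
        {pi ! k, pi ! Suc k} \<in> D \<and> crosses n {pi ! k, pi ! Suc k} {a, b}) \<and>
     (\<forall>k l. odd k \<and> odd l \<and> k < l \<and> Suc l < length pi \<longrightarrow>
        cross_before n a b {pi ! k, pi ! Suc k} {pi ! l, pi ! Suc l})}"

end

theory Submission
  imports Defs
begin

text \<open>Cyclically, \<open>\<alpha> < \<eta> < \<beta> < \<zeta> < \<alpha>\<close>, and every diagonal of \<open>D\<close> has its
  endpoints in the arc \<open>[\<eta>, \<zeta>]\<close>. Every vertex \<open>\<pi>\<^sub>i\<close> with \<open>i \<ge> 2\<close> other than \<open>\<beta>\<close>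
  is an endpoint of some diagonal \<open>{\<pi>\<^sub>2\<^sub>j, \<pi>\<^sub>2\<^sub>j\<^sub>+\<^sub>1} \<in> D\<close>, so it only remains to
  exclude \<open>\<eta>\<close>. For \<open>j = 1\<close> this is the hypothesis \<open>\<pi>\<^sub>3 \<noteq> \<eta>\<close>. For \<open>j > 1\<close> the
  diagonal crosses \<open>{\<alpha>, \<beta>}\<close> after \<open>{\<zeta>, \<pi>\<^sub>3}\<close>: its endpoint on the \<open>\<alpha>\<beta>\<close>-side
  comes after \<open>\<pi>\<^sub>3 \<in> (\<eta>, \<zeta>]\<close> and hence after \<open>\<eta>\<close>, while its endpoint on the
  \<open>\<beta>\<alpha>\<close>-side cannot be \<open>\<eta>\<close>, which lies on the \<open>\<alpha>\<beta>\<close>-side.\<close>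

lemma cdist_eq:
  assumes "a < n" "x < n"
  shows "cdist n a x = (if a \<le> x then x - a else n + x - a)"
proof (cases "a \<le> x")
  case True
  then have "(int x - int a) mod int n = int x - int a"
    using assms by (intro mod_pos_pos_trivial) auto
  then show ?thesis using True unfolding cdist_def by simp
next
  case False
  have "(int x - int a) mod int n = (int x - int a + int n) mod int n" by simp
  also have "\<dots> = int x - int a + int n"
    using False assms by (intro mod_pos_pos_trivial) auto
  finally show ?thesis using False unfolding cdist_def by simp
qed

lemma cyc_oo_imp_cyc_oc: "cyc_oo n a x b \<Longrightarrow> cyc_oc n a x b"
  unfolding cyc_oo_def cyc_oc_def by simp

lemma cyc_oc_iff_cyc_cc:
  "x < n \<Longrightarrow> a < n \<Longrightarrow> cyc_oc n a x b \<longleftrightarrow> cyc_cc n a x b \<and> x \<noteq> a"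
  unfolding cyc_oc_def cyc_cc_def by (auto simp: cdist_eq split: if_splits)

lemma cyc_cc_left: "cyc_cc n a a b"
  unfolding cyc_cc_def cdist_def by simp

lemma cyc_cc_right: "cyc_cc n a b b"
  unfolding cyc_cc_def by simp

lemma cyc_oo_rotate:
  "\<lbrakk>a < n; b < n; c < n; d < n; cyc_oo n d a c; cyc_oo n c b d\<rbrakk> \<Longrightarrow> cyc_oo n a c b"
  unfolding cyc_oo_def by (simp add: cdist_eq split: if_splits; linarith)

lemma cyc_oo_not_cyc_oo_swap:
  "\<lbrakk>a < n; b < n; x < n; cyc_oo n a x b\<rbrakk> \<Longrightarrow> \<not> cyc_oo n b x a"
  unfolding cyc_oo_def by (simp add: cdist_eq split: if_splits; linarith)

lemma cyc_oc_disjoint: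
  "\<lbrakk>a < n; c < n; x < n; z < n; cyc_oo n z a c; cyc_oc n a x c\<rbrakk> \<Longrightarrow> \<not> cyc_oc n c x z"
  unfolding cyc_oo_def cyc_oc_def by (simp add: cdist_eq split: if_splits; linarith)

text \<open>In the notation of the theorem, \<open>a, b, z, e, c\<close> are \<open>\<alpha>, \<beta>, \<zeta>, \<eta>, \<pi>\<^sub>3\<close>.\<close>

lemma cross_before_avoids_vertex:
  assumes n: "a < n" "b < n" "z < n" "e < n" "c < n"
    and a: "cyc_oo n z a e" and b: "cyc_oo n e b z" and c: "cyc_oc n e c z"
    and before: "cross_before n a b {z, c} d"
  shows "e \<notin> d"
proof
  assume "e \<in> d"
  obtain x1 y1 x2 y2 where
    first: "{z, c} = {x1, y1}" and d: "d = {x2, y2}"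
    and x1: "cyc_oo n a x1 b" and y2: "cyc_oo n b y2 a"
    and order: "cdist n a x1 \<le> cdist n a x2"
    using before unfolding cross_before_def by blast
  have e_ab: "cyc_oo n a e b" using cyc_oo_rotate[OF n(1,2,4,3) a b] .
  have z_ba: "cyc_oo n b z a" using cyc_oo_rotate[OF n(2,1,3,4) b a] .
  have "x1 \<noteq> z" using cyc_oo_not_cyc_oo_swap[OF n(2,1,3) z_ba] x1 by blast
  then have "x1 = c" using first by (auto simp: doubleton_eq_iff)
  have "y2 \<noteq> e" using cyc_oo_not_cyc_oo_swap[OF n(1,2,4) e_ab] y2 by blast
  then have "x2 = e" using \<open>e \<in> d\<close> d by blast
  then have "cyc_oc n a c e"
    using x1 order \<open>x1 = c\<close> unfolding cyc_oo_def cyc_oc_def by simp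
  then show False using cyc_oc_disjoint[OF n(1,4,5,3) a] c by blast
qed

lemma dissection_diagonal_subset: "is_dissection n W D \<Longrightarrow> d \<in> D \<Longrightarrow> d \<subseteq> W"
  unfolding is_dissection_def is_internal_def is_diagonal_def by auto

lemma T_path_in_arc:
  assumes n: "a < n" "b < n" "z < n" "e < n"
    and a: "cyc_oo n z a e" and b: "cyc_oo n e b z"
    and D_arc: "\<forall>d\<in>D. \<forall>x\<in>d. cyc_cc n e x z"
    and pi: "pi \<in> T_paths n D a b" and len: "3 \<le> length pi"
    and pi1: "pi ! 1 = z" and pi2: "pi ! 2 \<noteq> e"
    and i: "1 \<le> i" "i < length pi"
  shows "cyc_oc n e (pi ! i) z"
proof -
  have vertices: "set pi \<subseteq> {0..<n}" and "last pi = b"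
    and in_D: "\<And>k. odd k \<Longrightarrow> Suc k < length pi \<Longrightarrow> {pi ! k, pi ! Suc k} \<in> D"
    and ordered: "\<And>k l. odd k \<Longrightarrow> odd l \<Longrightarrow> k < l \<Longrightarrow> Suc l < length pi \<Longrightarrow>
      cross_before n a b {pi ! k, pi ! Suc k} {pi ! l, pi ! Suc l}"
    using pi unfolding T_paths_def by auto
  have lt_n: "pi ! k < n" if "k < length pi" for k
    using vertices that nth_mem by fastforce
  have "z \<noteq> e" using a n unfolding cyc_oo_def by (auto simp: cdist_eq)
  have c_n: "pi ! 2 < n" using lt_n len by simp
  have first: "{z, pi ! 2} \<in> D"
    using in_D[of 1] len pi1 by (simp add: numeral_2_eq_2)
  have c: "cyc_oc n e (pi ! 2) z"
    using D_arc first pi2 c_n n(4) by (simp add: cyc_oc_iff_cyc_cc)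
  have step_in_arc: "cyc_oc n e x z" if l: "odd l" "Suc l < length pi"
    and x: "x \<in> {pi ! l, pi ! Suc l}" for l x
  proof -
    have "e \<notin> {pi ! l, pi ! Suc l}"
    proof (cases "l = 1")
      case True
      then show ?thesis using pi1 pi2 \<open>z \<noteq> e\<close> by (auto simp: numeral_2_eq_2)
    next
      case False
      with l(1) have "1 < l" by (auto elim: oddE)
      then have "cross_before n a b {z, pi ! 2} {pi ! l, pi ! Suc l}"
        using ordered[of 1 l] l pi1 by (simp add: numeral_2_eq_2)
      then show ?thesis
        using cross_before_avoids_vertex[OF n c_n a b c] by blast
    qed
    moreover have "x < n" using x l lt_n by auto
    ultimately show ?thesis
      using D_arc in_D[OF l] x n(4) by (auto simp: cyc_oc_iff_cyc_cc)
  qed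
  show ?thesis
  proof (cases "Suc i = length pi")
    case True
    moreover have "pi \<noteq> []" using len by auto
    ultimately have "pi ! i = b" using \<open>last pi = b\<close> by (metis last_conv_nth diff_Suc_1)
    then show ?thesis using b by (simp add: cyc_oo_imp_cyc_oc)
  next
    case False
    define l where "l = (if odd i then i else i - 1)"
    have "odd l" "Suc l < length pi" "pi ! i \<in> {pi ! l, pi ! Suc l}"
      using False i unfolding l_def by auto
    then show ?thesis using step_in_arc by blast
  qed
qed

theorem lemma3p6:
  fixes n :: nat and D D2 :: "nat set set" and \<zeta> \<eta> \<alpha> \<beta> :: nat and pi :: "nat list"
  assumes "3 \<le> n"
    and "is_dissection n {0..<n} D"
    and "D \<noteq> {}"
    and "{\<zeta>, \<eta>} \<in> D"
    and "D = {{\<zeta>, \<eta>}} \<union> D2"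
    and "is_dissection n {\<epsilon> \<in> {0..<n}. cyc_cc n \<eta> \<epsilon> \<zeta>} D2"
    and "\<alpha> \<in> {\<epsilon> \<in> {0..<n}. cyc_oo n \<zeta> \<epsilon> \<eta>}"
    and "\<beta> \<in> {\<epsilon> \<in> {0..<n}. cyc_oo n \<eta> \<epsilon> \<zeta>}"
    and "pi \<in> T_paths n D \<alpha> \<beta>"
    and "3 \<le> length pi"
    and "pi ! 1 = \<zeta>"
    and "pi ! 2 \<noteq> \<eta>"
  shows "\<forall>i. 1 \<le> i \<and> i < length pi \<longrightarrow> cyc_oc n \<eta> (pi ! i) \<zeta>"
proof -
  have "\<zeta> < n" "\<eta> < n" using dissection_diagonal_subset[OF assms(2,4)] by auto
  have "\<forall>d\<in>D2. \<forall>x\<in>d. cyc_cc n \<eta> x \<zeta>"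
    using dissection_diagonal_subset[OF assms(6)] by blast
  then have "\<forall>d\<in>D. \<forall>x\<in>d. cyc_cc n \<eta> x \<zeta>"
    using assms(5) cyc_cc_left cyc_cc_right by auto
  moreover have "\<alpha> < n" "cyc_oo n \<zeta> \<alpha> \<eta>" "\<beta> < n" "cyc_oo n \<eta> \<beta> \<zeta>"
    using assms(7,8) by auto
  ultimately show ?thesis
    using T_path_in_arc[OF _ _ \<open>\<zeta> < n\<close> \<open>\<eta> < n\<close> _ _ _ assms(9-12)] by blast
qed

end
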